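(* Let $G$ be an infinite vertex-transitive graph of finite degree with a fixed vertex $o$. For every $D\in\mathbb{N}$ there exists $L_0=L_0(D)$ such that for every $L>L_0$, \[ \sum_{x\in B_L}G_{B_L}(x,o)<10\sum_{x\in B_L:\ B(x,D)\subset B_L}G_{B_L}(x,o). \]
   Context: $B(x,r)$ is the ball of radius $r$ (in graph distance) centered at $x$, and $B_L=B(o,L)$. For $Z\subset V(G)$, $G_Z(x,y)=E_x\bigl[\sum_{t=0}^{\tau_{Z^c}}\mathbf{1}\{X(t)=y\}\bigr]$, where $X$ is simple random walk on $G$ started at $x$ and $\tau_{Z^c}=\inf\{t\ge0:X(t)\notin Z\}$. *)

theory Defs
  imports "HOL-Analysis.Analysis"
begin

text \<open>Graphs: vertex set = the type 'a, adjacency E symmetric and irreflexive.\<close>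

definition nbrs :: "('a \<Rightarrow> 'a \<Rightarrow> bool) \<Rightarrow> 'a \<Rightarrow> 'a set" where
  "nbrs E x = {y. E x y}"

definition graph_rel :: "('a \<Rightarrow> 'a \<Rightarrow> bool) \<Rightarrow> ('a \<times> 'a) set" where
  "graph_rel E = {(u, v). E u v}"

definition connected_graph :: "('a \<Rightarrow> 'a \<Rightarrow> bool) \<Rightarrow> bool" where
  "connected_graph E \<longleftrightarrow> (\<forall>x y. (x, y) \<in> (graph_rel E)\<^sup>*)"

definition vertex_transitive :: "('a \<Rightarrow> 'a \<Rightarrow> bool) \<Rightarrow> bool" where
  "vertex_transitive E \<longleftrightarrow>
     (\<forall>x y. \<exists>f. bij f \<and> (\<forall>u v. E u v \<longleftrightarrow> E (f u) (f v)) \<and> f x = y)"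

definition gdist :: "('a \<Rightarrow> 'a \<Rightarrow> bool) \<Rightarrow> 'a \<Rightarrow> 'a \<Rightarrow> nat" where
  "gdist E x y = (LEAST n. (x, y) \<in> graph_rel E ^^ n)"

definition gball :: "('a \<Rightarrow> 'a \<Rightarrow> bool) \<Rightarrow> 'a \<Rightarrow> nat \<Rightarrow> 'a set" where
  "gball E x r = {y. gdist E x y \<le> r}"

definition srw_p :: "('a \<Rightarrow> 'a \<Rightarrow> bool) \<Rightarrow> 'a \<Rightarrow> 'a \<Rightarrow> real" where
  "srw_p E x y = (if E x y then 1 / real (card (nbrs E x)) else 0)"

text \<open>killed_pow E Z t x y = P_x(X_t = y and X_0,...,X_{t-1} \<in> Z) = P_x(X_t = y, t \<le> \<tau>_{Z^c}).\<close>
fun killed_pow :: "('a \<Rightarrow> 'a \<Rightarrow> bool) \<Rightarrow> 'a set \<Rightarrow> nat \<Rightarrow> 'a \<Rightarrow> 'a \<Rightarrow> real" where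
  "killed_pow E Z 0 x y = (if x = y then 1 else 0)"
| "killed_pow E Z (Suc t) x y =
     (if x \<in> Z then (\<Sum>z\<in>nbrs E x. srw_p E x z * killed_pow E Z t z y) else 0)"

text \<open>Green function G_Z(x,y) = E_x[sum_{t=0}^{\<tau>} 1{X_t = y}] = sum_t P_x(X_t=y, t \<le> \<tau>).\<close>
definition green :: "('a \<Rightarrow> 'a \<Rightarrow> bool) \<Rightarrow> 'a set \<Rightarrow> 'a \<Rightarrow> 'a \<Rightarrow> ennreal" where
  "green E Z x y = (\<Sum>t. ennreal (killed_pow E Z t x y))"

end

theory Submission
  imports Defs
begin

(* Write B = B_L and I for the points x of B with B(x,D) contained in B. Simple random walk
   on a d-regular graph is reversible, so G_B(x,o) = G_B(o,x), and the two sums are the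
   expected numbers of steps the walk started at o spends in B, resp. in I, before leaving B.
   The walk cannot leave B before time L, so the first sum is at least L + 1. From every
   point of the layer B - I some path of length at most D leaves B, and the walk follows it
   with probability at least d^-D. So the probability of being in the layer at time t, times
   d^-D, is at most the drop of the survival probability between times t and t + D, and
   telescoping bounds the expected time in the layer by D d^D. Once L > 2 D d^D the layer
   carries less than half of the total, which is finite since B misses some vertex. *)

lemma sum_lessThan_diff_shift:
  fixes s :: "nat \<Rightarrow> 'a::ab_group_add"
  shows "(\<Sum>t<N. s t - s (t + m)) = (\<Sum>t<m. s t) - (\<Sum>t<m. s (t + N))"
proof (induction N)
  case (Suc N)
  have "(\<Sum>t<Suc N. s t - s (t + m)) = (\<Sum>t<N. s t - s (t + m)) + (s N - s (N + m))"
    by simp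
  also have "s N - s (N + m) = (\<Sum>t<m. s (t + N)) - (\<Sum>t<m. s (t + Suc N))"
    using sum_lessThan_telescope'[of "\<lambda>t. s (t + N)" m]
    by (simp add: sum_subtractf[symmetric] add.commute)
  finally show ?case
    by (simp add: Suc.IH)
qed simp

lemma ennreal_add_lt_double:
  fixes i a :: ennreal and c l :: nat
  assumes "a \<le> of_nat c" "of_nat l \<le> i + a" "i + a < top" "2 * c < l"
  shows "i + a < 2 * i"
proof -
  have "of_nat c < i"
  proof (rule ccontr)
    assume "\<not> of_nat c < i"
    then have "i + a \<le> of_nat c + of_nat c"
      using assms(1) by (intro add_mono) auto
    also have "\<dots> < of_nat l"
      using assms(4) by (simp flip: of_nat_add)
    finally show False using assms(2) by simp
  qed
  then have "a < i" using assms(1) by simp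
  moreover have "i \<noteq> top" using assms(3) by auto
  ultimately have "i + a < i + i" by (simp add: ennreal_add_left_cancel_less)
  then show ?thesis by (simp add: mult_2)
qed

lemma relpow_gdist: "connected_graph E \<Longrightarrow> (x, y) \<in> graph_rel E ^^ gdist E x y"
  unfolding gdist_def connected_graph_def
  by (rule LeastI_ex) (use rtrancl_power in blast)

lemma gdist_le: "(x, y) \<in> graph_rel E ^^ k \<Longrightarrow> gdist E x y \<le> k"
  unfolding gdist_def by (rule Least_le)

lemma gdist_self: "gdist E x x = 0"
  unfolding gdist_def by (rule Least_eq_0) simp

lemma mem_gball_self: "x \<in> gball E x r"
  by (simp add: gball_def gdist_self)

lemma gball_subset_Suc_gball:
  assumes "connected_graph E" "E x z"
  shows "gball E z t \<subseteq> gball E x (Suc t)"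
proof
  fix y assume "y \<in> gball E z t"
  moreover have "(x, y) \<in> graph_rel E ^^ Suc (gdist E z y)"
    using relpow_Suc_I2[OF _ relpow_gdist[OF assms(1)]] assms(2) by (simp add: graph_rel_def)
  ultimately show "y \<in> gball E x (Suc t)"
    using gdist_le by (fastforce simp: gball_def)
qed

lemma finite_relpow_image:
  assumes "\<And>x. finite (nbrs E x)"
  shows "finite {y. (x, y) \<in> graph_rel E ^^ k}"
proof (induction k)
  case (Suc k)
  have "{y. (x, y) \<in> graph_rel E ^^ Suc k} \<subseteq> (\<Union>z\<in>{y. (x, y) \<in> graph_rel E ^^ k}. nbrs E z)"
    by (auto elim!: relpow_Suc_E simp: graph_rel_def nbrs_def)
  then show ?case using Suc assms by (meson finite_UN_I finite_subset)
qed simp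

lemma finite_gball:
  assumes "\<And>x. finite (nbrs E x)" "connected_graph E"
  shows "finite (gball E x r)"
proof -
  have "gball E x r \<subseteq> (\<Union>k\<le>r. {y. (x, y) \<in> graph_rel E ^^ k})"
    unfolding gball_def using relpow_gdist[OF assms(2)] by blast
  then show ?thesis using finite_relpow_image[OF assms(1)] by (meson finite_UN_I finite_atMost finite_subset)
qed

lemma nbrs_nonempty:
  assumes "connected_graph E" "y \<noteq> x"
  shows "nbrs E x \<noteq> {}"
proof -
  have "(x, y) \<in> (graph_rel E)\<^sup>*"
    using assms(1) unfolding connected_graph_def by blast
  then obtain z where "(x, z) \<in> graph_rel E"
    using assms(2) by (auto elim: converse_rtranclE)
  then show ?thesis by (auto simp: graph_rel_def nbrs_def)
qed

lemma vertex_transitive_card_nbrs: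
  assumes "vertex_transitive E"
  shows "card (nbrs E x) = card (nbrs E y)"
proof -
  obtain f where "bij f" and E_f: "\<And>u v. E u v \<longleftrightarrow> E (f u) (f v)" and "f y = x"
    using assms unfolding vertex_transitive_def by blast
  have "nbrs E x = f ` nbrs E y"
  proof (intro equalityI subsetI)
    fix w assume "w \<in> nbrs E x"
    moreover have "w = f (inv f w)"
      using \<open>bij f\<close> by (simp add: bij_is_surj surj_f_inv_f)
    ultimately show "w \<in> f ` nbrs E y"
      using E_f \<open>f y = x\<close> unfolding nbrs_def by (metis image_eqI mem_Collect_eq)
  qed (use E_f \<open>f y = x\<close> in \<open>auto simp: nbrs_def\<close>)
  then show ?thesis
    using card_image[OF inj_on_subset[OF bij_is_inj[OF \<open>bij f\<close>] subset_UNIV]] by simp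
qed

lemma killed_pow_nonneg: "killed_pow E Z t x y \<ge> 0"
  by (induction t arbitrary: x) (auto intro!: sum_nonneg mult_nonneg_nonneg simp: srw_p_def)

lemma killed_pow_outside: "x \<notin> Z \<Longrightarrow> y \<in> Z \<Longrightarrow> killed_pow E Z t x y = 0"
  by (cases t) auto

lemma killed_pow_add:
  assumes "finite Z" "y \<in> Z"
  shows "killed_pow E Z (t + m) u y = (\<Sum>x\<in>Z. killed_pow E Z t u x * killed_pow E Z m x y)"
proof (induction t arbitrary: u)
  case 0
  have "killed_pow E Z 0 u x * killed_pow E Z m x y = (if u = x then killed_pow E Z m x y else 0)"
    for x by simp
  then have "(\<Sum>x\<in>Z. killed_pow E Z 0 u x * killed_pow E Z m x y)
      = (if u \<in> Z then killed_pow E Z m u y else 0)"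
    using assms(1) by simp
  then show ?case using assms(2) by (simp add: killed_pow_outside)
next
  case (Suc t u)
  have "(\<Sum>z\<in>nbrs E u. srw_p E u z * (\<Sum>x\<in>Z. killed_pow E Z t z x * killed_pow E Z m x y))
      = (\<Sum>x\<in>Z. (\<Sum>z\<in>nbrs E u. srw_p E u z * killed_pow E Z t z x) * killed_pow E Z m x y)"
    by (simp add: sum_distrib_left sum_distrib_right mult.assoc sum.swap[of _ "nbrs E u"])
  then show ?case by (simp add: Suc.IH)
qed

definition survival :: "('a \<Rightarrow> 'a \<Rightarrow> bool) \<Rightarrow> 'a set \<Rightarrow> nat \<Rightarrow> 'a \<Rightarrow> real" where
  "survival E Z t x = (\<Sum>y\<in>Z. killed_pow E Z t x y)"

lemma survival_0: "finite Z \<Longrightarrow> survival E Z 0 x = (if x \<in> Z then 1 else 0)"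
  unfolding survival_def by simp

lemma survival_Suc:
  "survival E Z (Suc t) x = (if x \<in> Z then (\<Sum>z\<in>nbrs E x. srw_p E x z * survival E Z t z) else 0)"
  unfolding survival_def by (auto simp: sum_distrib_left intro: sum.swap)

lemma survival_outside: "x \<notin> Z \<Longrightarrow> survival E Z t x = 0"
  unfolding survival_def by (simp add: killed_pow_outside)

lemma survival_add:
  assumes "finite Z"
  shows "survival E Z (t + m) u = (\<Sum>x\<in>Z. killed_pow E Z t u x * survival E Z m x)"
proof -
  have "survival E Z (t + m) u = (\<Sum>y\<in>Z. \<Sum>x\<in>Z. killed_pow E Z t u x * killed_pow E Z m x y)"
    unfolding survival_def using assms by (simp add: killed_pow_add)
  also have "\<dots> = (\<Sum>x\<in>Z. killed_pow E Z t u x * survival E Z m x)"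
    unfolding survival_def sum_distrib_left by (rule sum.swap)
  finally show ?thesis .
qed

locale regular_graph =
  fixes E :: "'a \<Rightarrow> 'a \<Rightarrow> bool" and d :: nat
  assumes E_sym: "\<And>x y. E x y \<longleftrightarrow> E y x"
    and finite_nbrs: "\<And>x. finite (nbrs E x)"
    and card_nbrs: "\<And>x. card (nbrs E x) = d"
    and degree_pos: "d > 0"
begin

lemma srw_p_edge: "E x y \<Longrightarrow> srw_p E x y = 1 / real d"
  by (simp add: srw_p_def card_nbrs)

lemma srw_p_sym: "srw_p E x y = srw_p E y x"
  unfolding srw_p_def using card_nbrs E_sym by auto

lemma sum_srw_p: "(\<Sum>z\<in>nbrs E x. srw_p E x z) = 1"
  using card_nbrs[of x] degree_pos by (simp add: nbrs_def srw_p_edge)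

lemma killed_pow_one: "x \<in> Z \<Longrightarrow> killed_pow E Z 1 x y = srw_p E x y"
  using finite_nbrs[of x] by (auto simp: srw_p_def nbrs_def if_distrib cong: if_cong)

lemma killed_pow_sym:
  assumes "finite Z" "x \<in> Z" "y \<in> Z"
  shows "killed_pow E Z t x y = killed_pow E Z t y x"
  using assms(2,3)
proof (induction t arbitrary: x y)
  case (Suc t x y)
  have "killed_pow E Z (Suc t) x y = (\<Sum>z\<in>Z. killed_pow E Z 1 x z * killed_pow E Z t z y)"
    using killed_pow_add[OF assms(1) Suc.prems(2), where t=1 and m=t] by (simp only: plus_1_eq_Suc)
  also have "\<dots> = (\<Sum>z\<in>Z. killed_pow E Z t y z * killed_pow E Z 1 z x)"
  proof (rule sum.cong)
    fix z assume "z \<in> Z"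
    then show "killed_pow E Z 1 x z * killed_pow E Z t z y = killed_pow E Z t y z * killed_pow E Z 1 z x"
      using Suc.IH[of z y] Suc.prems killed_pow_one[of x Z z] killed_pow_one[of z Z x] srw_p_sym[of x z]
      by (metis mult.commute)
  qed simp
  also have "\<dots> = killed_pow E Z (Suc t) y x"
    using killed_pow_add[OF assms(1) Suc.prems(1), where t=t and m=1] by (simp only: Suc_eq_plus1)
  finally show ?case .
qed simp

lemma survival_nonneg: "survival E Z t x \<ge> 0"
  unfolding survival_def by (simp add: sum_nonneg killed_pow_nonneg)

lemma survival_le_1: "finite Z \<Longrightarrow> survival E Z t x \<le> 1"
proof (induction t arbitrary: x)
  case (Suc t x)
  have "(\<Sum>z\<in>nbrs E x. srw_p E x z * survival E Z t z) \<le> (\<Sum>z\<in>nbrs E x. srw_p E x z)"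
    using Suc by (intro sum_mono mult_left_le) (auto simp: srw_p_def)
  then show ?case by (simp add: survival_Suc sum_srw_p)
qed (simp add: survival_0)

lemma survival_eq_1:
  assumes "connected_graph E" "finite Z" "gball E x t \<subseteq> Z"
  shows "survival E Z t x = 1"
  using assms(3)
proof (induction t arbitrary: x)
  case 0
  then show ?case using assms(2) mem_gball_self by (force simp: survival_0)
next
  case (Suc t x)
  have "survival E Z t z = 1" if "z \<in> nbrs E x" for z
    using that Suc gball_subset_Suc_gball[OF assms(1)] by (force simp: nbrs_def)
  then show ?case
    using Suc.prems mem_gball_self by (force simp: survival_Suc sum_srw_p)
qed

lemma survival_le_path:
  assumes "finite Z" "(x, y) \<in> graph_rel E ^^ j" "y \<notin> Z" "j \<le> k"
  shows "survival E Z k x \<le> 1 - 1 / real d ^ j"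
  using assms(2,4)
proof (induction j arbitrary: x k)
  case 0
  then show ?case using assms(3) by (simp add: survival_outside)
next
  case (Suc j x)
  obtain k' where k: "k = Suc k'" "j \<le> k'"
    using Suc.prems(2) by (cases k) auto
  obtain z where "E x z" and zy: "(z, y) \<in> graph_rel E ^^ j"
    using relpow_Suc_D2[OF Suc.prems(1)] by (auto simp: graph_rel_def)
  then have z: "z \<in> nbrs E x" and pz: "srw_p E x z = 1 / real d"
    by (simp_all add: nbrs_def srw_p_edge)
  show ?case
  proof (cases "x \<in> Z")
    case False
    then show ?thesis
      using degree_pos one_le_power[of "real d" "Suc j"] by (simp add: survival_outside)
  next
    case True
    have "survival E Z k x
        = srw_p E x z * survival E Z k' z + (\<Sum>w\<in>nbrs E x - {z}. srw_p E x w * survival E Z k' w)"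
      using True k z finite_nbrs by (simp add: survival_Suc sum.remove)
    also have "\<dots> \<le> 1 / real d * (1 - 1 / real d ^ j) + (\<Sum>w\<in>nbrs E x - {z}. srw_p E x w)"
    proof (rule add_mono)
      show "srw_p E x z * survival E Z k' z \<le> 1 / real d * (1 - 1 / real d ^ j)"
        using Suc.IH[OF zy k(2)] pz by (simp add: divide_right_mono)
      show "(\<Sum>w\<in>nbrs E x - {z}. srw_p E x w * survival E Z k' w) \<le> (\<Sum>w\<in>nbrs E x - {z}. srw_p E x w)"
        using assms(1) by (intro sum_mono mult_left_le survival_le_1) (auto simp: srw_p_def)
    qed
    also have "(\<Sum>w\<in>nbrs E x - {z}. srw_p E x w) = 1 - 1 / real d"
      using sum_srw_p[of x] z finite_nbrs pz by (simp add: sum.remove)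
    also have "1 / real d * (1 - 1 / real d ^ j) + (1 - 1 / real d) = 1 - 1 / real d ^ Suc j"
      using degree_pos by (simp add: field_simps)
    finally show ?thesis .
  qed
qed

lemma survival_le_exit:
  assumes "connected_graph E" "finite Z" "y \<notin> Z" "gdist E x y \<le> k"
  shows "survival E Z k x \<le> 1 - 1 / real d ^ k"
proof -
  have "survival E Z k x \<le> 1 - 1 / real d ^ gdist E x y"
    using survival_le_path[OF assms(2) relpow_gdist[OF assms(1)] assms(3,4)] .
  also have "\<dots> \<le> 1 - 1 / real d ^ k"
    using assms(4) degree_pos by (simp add: frac_le power_increasing)
  finally show ?thesis .
qed

lemma survival_add_le:
  assumes "finite Z" "S \<subseteq> Z" "\<And>x. x \<in> S \<Longrightarrow> survival E Z m x \<le> 1 - q"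
  shows "survival E Z (t + m) u \<le> survival E Z t u - q * (\<Sum>x\<in>S. killed_pow E Z t u x)"
proof -
  have "survival E Z (t + m) u = (\<Sum>x\<in>Z. killed_pow E Z t u x * survival E Z m x)"
    using assms(1) by (rule survival_add)
  also have "\<dots> \<le> (\<Sum>x\<in>Z. killed_pow E Z t u x * (1 - q * of_bool (x \<in> S)))"
    using assms(1,3) killed_pow_nonneg survival_le_1
    by (intro sum_mono mult_left_mono) (auto simp: of_bool_def)
  also have "\<dots> = survival E Z t u - q * (\<Sum>x\<in>Z. of_bool (x \<in> S) * killed_pow E Z t u x)"
    by (simp add: survival_def algebra_simps sum_subtractf sum_distrib_left)
  also have "(\<Sum>x\<in>Z. of_bool (x \<in> S) * killed_pow E Z t u x) = (\<Sum>x\<in>S. killed_pow E Z t u x)"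
    using assms(1,2) by (simp add: Int_absorb1)
  finally show ?thesis .
qed

lemma sum_occupation_le:
  assumes "finite Z" "S \<subseteq> Z" "q > 0" "\<And>x. x \<in> S \<Longrightarrow> survival E Z m x \<le> 1 - q"
  shows "(\<Sum>t<N. \<Sum>x\<in>S. killed_pow E Z t u x) \<le> m / q"
proof -
  have "q * (\<Sum>x\<in>S. killed_pow E Z t u x) \<le> survival E Z t u - survival E Z (t + m) u" for t
    using survival_add_le[OF assms(1,2,4), of t u] by linarith
  then have "q * (\<Sum>t<N. \<Sum>x\<in>S. killed_pow E Z t u x) \<le> (\<Sum>t<N. survival E Z t u - survival E Z (t + m) u)"
    by (subst sum_distrib_left) (rule sum_mono)
  also have "\<dots> \<le> (\<Sum>t<m. survival E Z t u)"
    using sum_lessThan_diff_shift[where s="\<lambda>t. survival E Z t u" and N=N and m=m]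
    by (simp add: sum_nonneg survival_nonneg)
  also have "\<dots> \<le> (\<Sum>t<m. 1)"
    using assms(1) by (intro sum_mono survival_le_1)
  finally show ?thesis
    using assms(3) by (simp add: field_simps)
qed

lemma sum_green_eq_suminf:
  assumes "finite Z" "r \<in> Z" "X \<subseteq> Z"
  shows "(\<Sum>x\<in>X. green E Z x r) = (\<Sum>t. ennreal (\<Sum>x\<in>X. killed_pow E Z t r x))"
proof -
  have "(\<Sum>x\<in>X. green E Z x r) = (\<Sum>x\<in>X. \<Sum>t. ennreal (killed_pow E Z t r x))"
    unfolding green_def using assms killed_pow_sym by (intro sum.cong) auto
  also have "\<dots> = (\<Sum>t. \<Sum>x\<in>X. ennreal (killed_pow E Z t r x))"
    by (rule suminf_sum[OF summableI, symmetric])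
  also have "\<dots> = (\<Sum>t. ennreal (\<Sum>x\<in>X. killed_pow E Z t r x))"
    by (simp add: killed_pow_nonneg)
  finally show ?thesis .
qed

lemma sum_green_le_near_exit:
  assumes "connected_graph E" "finite Z" "r \<in> Z" "S \<subseteq> Z"
    and "\<And>x. x \<in> S \<Longrightarrow> \<exists>y. y \<notin> Z \<and> gdist E x y \<le> m"
  shows "(\<Sum>x\<in>S. green E Z x r) \<le> of_nat (m * d ^ m)"
proof -
  have "survival E Z m x \<le> 1 - 1 / real d ^ m" if "x \<in> S" for x
    using assms(5)[OF that] survival_le_exit[OF assms(1,2)] by blast
  then have "(\<Sum>t<N. \<Sum>x\<in>S. killed_pow E Z t r x) \<le> m / (1 / real d ^ m)" for N
    using degree_pos by (intro sum_occupation_le[OF assms(2,4)]) auto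
  then have "(\<Sum>t<N. ennreal (\<Sum>x\<in>S. killed_pow E Z t r x)) \<le> of_nat (m * d ^ m)" for N
    by (simp add: killed_pow_nonneg sum_nonneg ennreal_of_nat_eq_real_of_nat ennreal_leI)
  then show ?thesis
    unfolding sum_green_eq_suminf[OF assms(2,3,4)] by (rule suminf_le_const[OF summableI])
qed

lemma sum_green_ge_Suc_radius:
  assumes "connected_graph E" "finite Z" "gball E r L \<subseteq> Z"
  shows "of_nat (Suc L) \<le> (\<Sum>x\<in>Z. green E Z x r)"
proof -
  have r: "r \<in> Z"
    using assms(3) mem_gball_self[of r E L] by blast
  have "survival E Z t r = 1" if "t \<le> L" for t
    using assms(3) that by (intro survival_eq_1[OF assms(1,2)]) (auto simp: gball_def)
  then have "of_nat (Suc L) = (\<Sum>t<Suc L. ennreal (survival E Z t r))"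
    by simp
  also have "\<dots> \<le> (\<Sum>t. ennreal (survival E Z t r))"
    by (rule sum_le_suminf[OF summableI]) auto
  also have "\<dots> = (\<Sum>x\<in>Z. green E Z x r)"
    unfolding survival_def using sum_green_eq_suminf[OF assms(2) r order_refl] by simp
  finally show ?thesis .
qed

lemma sum_green_ball_lt_double_interior:
  fixes r :: 'a and D L :: nat
  assumes "connected_graph E" "infinite (UNIV :: 'a set)" "2 * (D * d ^ D) < L"
  defines "B \<equiv> gball E r L"
  shows "(\<Sum>x\<in>B. green E B x r) < 2 * (\<Sum>x\<in>{x \<in> B. gball E x D \<subseteq> B}. green E B x r)"
proof -
  define I where "I = {x \<in> B. gball E x D \<subseteq> B}"
  let ?G = "\<lambda>X. \<Sum>x\<in>X. green E B x r"
  have B: "finite B" "r \<in> B"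
    unfolding B_def using finite_gball[OF finite_nbrs assms(1)] mem_gball_self by auto
  have "I \<subseteq> B"
    unfolding I_def by auto
  then have split: "?G B = ?G I + ?G (B - I)"
    using B(1) by (simp add: sum.subset_diff)
  have "of_nat (Suc L) \<le> ?G B"
    using sum_green_ge_Suc_radius[OF assms(1) B(1)] by (simp add: B_def)
  moreover have "?G (B - I) \<le> of_nat (D * d ^ D)"
    by (rule sum_green_le_near_exit[OF assms(1) B]) (auto simp: I_def gball_def)
  moreover have "?G B < top"
  proof -
    obtain y where "y \<notin> B"
      using assms(2) B(1) by (metis ex_new_if_finite)
    define M where "M = Max ((\<lambda>x. gdist E x y) ` B)"
    have "?G B \<le> of_nat (M * d ^ M)"
      using \<open>y \<notin> B\<close> B(1) by (intro sum_green_le_near_exit[OF assms(1) B order_refl]) (auto simp: M_def)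
    then show ?thesis
      using of_nat_less_top by (rule le_less_trans)
  qed
  ultimately have "?G I + ?G (B - I) < 2 * ?G I"
    using assms(3) unfolding split by (intro ennreal_add_lt_double[where l="Suc L" and c="D * d ^ D"]) auto
  then show ?thesis
    unfolding split I_def .
qed

end

theorem lemma4p1:
  fixes E :: "'a \<Rightarrow> 'a \<Rightarrow> bool" and root :: 'a
  assumes sym: "\<And>x y. E x y \<longleftrightarrow> E y x"
    and irrefl: "\<And>x. \<not> E x x"
    and infinite_V: "infinite (UNIV :: 'a set)"
    and finite_deg: "\<And>x. finite (nbrs E x)"
    and conn: "connected_graph E"
    and vt: "vertex_transitive E"
  shows "\<forall>D::nat. \<exists>L0::nat. \<forall>L>L0.
           (\<Sum>x\<in>gball E root L. green E (gball E root L) x root)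
             < 10 * (\<Sum>x\<in>{x \<in> gball E root L. gball E x D \<subseteq> gball E root L}.
                        green E (gball E root L) x root)"
proof
  fix D :: nat
  define d where "d = card (nbrs E root)"
  obtain y where "y \<noteq> root"
    using ex_new_if_finite[OF infinite_V, of "{root}"] by auto
  interpret regular_graph E d
    using sym finite_deg vertex_transitive_card_nbrs[OF vt] nbrs_nonempty[OF conn \<open>y \<noteq> root\<close>]
    by unfold_locales (auto simp: d_def card_gt_0_iff)
  have double_le_10: "2 * a \<le> 10 * a" for a :: ennreal
    by (intro mult_right_mono) simp_all
  show "\<exists>L0. \<forall>L>L0. (\<Sum>x\<in>gball E root L. green E (gball E root L) x root)
             < 10 * (\<Sum>x\<in>{x \<in> gball E root L. gball E x D \<subseteq> gball E root L}.
                        green E (gball E root L) x root)"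
    using sum_green_ball_lt_double_interior[OF conn infinite_V] double_le_10
    by (meson order.strict_trans2)
qed

end
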